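(* Let $Y$ be a locally compact sober space, let $\mu\colon Y\to[0,1]$ be such that $\mu^{-1}([0,a))$ is open in $Y$ for every $a\in[0,1]$, and let $X=\mu^{-1}(\{0\})$ with the subspace topology. For a non-empty compact saturated $Q\subseteq Y$ let $r(Q)=\max\{\mu(y)\mid y\in Q\}$ (which exists). Then: (a) for every filtered family $(Q_i)_{i\in I}$ of non-empty compact saturated subsets of $Y$ with $\inf_{i\in I} r(Q_i)=0$, the intersection $\bigcap_{i\in I}Q_i$ is a non-empty compact saturated subset of $X$; (b) conversely, every non-empty compact saturated subset $Q$ of $X$ is of the form $Q=\bigcap_{i\in I}Q_i=\bigcap_{i\in I}\mathrm{int}(Q_i)$ for some filtered family $(Q_i)_{i\in I}$ of non-empty compact saturated subsets of $Y$ with $\inf_{i\in I}r(Q_i)=0$, where $\mathrm{int}$ denotes interior in $Y$; and when $Y$ is a continuous dcpo with its Scott topology, the $Q_i$ can be chosen of the form ${\uparrow}A_i$ with $A_i$ a non-empty finite subset of $Y$.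
   Context: Compactness does not presuppose separation; a saturated set is one that is upward closed in the specialization preorder. A family is filtered if any two members contain a third member. ${\uparrow}A$ is the upward closure of $A$. Every LCS-complete space (a $G_\delta$ subset of a locally compact sober space) arises as such an $X$ for suitable $Y,\mu$. *)

theory Defs
  imports "HOL-Analysis.Analysis"
begin

definition spec_le :: "'a topology \<Rightarrow> 'a \<Rightarrow> 'a \<Rightarrow> bool" where
  "spec_le Y x y \<longleftrightarrow> x \<in> topspace Y \<and> y \<in> topspace Y \<and>
     (\<forall>U. openin Y U \<and> x \<in> U \<longrightarrow> y \<in> U)"

definition saturated_in :: "'a topology \<Rightarrow> 'a set \<Rightarrow> bool" where
  "saturated_in Y A \<longleftrightarrow> A \<subseteq> topspace Y \<and>
     (\<forall>x\<in>A. \<forall>y. spec_le Y x y \<longrightarrow> y \<in> A)"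

definition upclosure :: "'a topology \<Rightarrow> 'a set \<Rightarrow> 'a set" where
  "upclosure Y A = {y \<in> topspace Y. \<exists>a\<in>A. spec_le Y a y}"

definition lc_space :: "'a topology \<Rightarrow> bool" where
  "lc_space Y \<longleftrightarrow> (\<forall>x U. openin Y U \<and> x \<in> U \<longrightarrow>
     (\<exists>V K. openin Y V \<and> compactin Y K \<and> x \<in> V \<and> V \<subseteq> K \<and> K \<subseteq> U))"

definition irreducible_closed :: "'a topology \<Rightarrow> 'a set \<Rightarrow> bool" where
  "irreducible_closed Y C \<longleftrightarrow> closedin Y C \<and> C \<noteq> {} \<and>
     (\<forall>A B. closedin Y A \<and> closedin Y B \<and> C \<subseteq> A \<union> B \<longrightarrow> C \<subseteq> A \<or> C \<subseteq> B)"

definition sober_space :: "'a topology \<Rightarrow> bool" where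
  "sober_space Y \<longleftrightarrow> (\<forall>C. irreducible_closed Y C \<longrightarrow>
     (\<exists>!x. x \<in> topspace Y \<and> Y closure_of {x} = C))"

definition ncs :: "'a topology \<Rightarrow> 'a set \<Rightarrow> bool" where
  "ncs Y Q \<longleftrightarrow> Q \<noteq> {} \<and> compactin Y Q \<and> saturated_in Y Q"

definition filtered_family :: "'i set \<Rightarrow> ('i \<Rightarrow> 'a set) \<Rightarrow> bool" where
  "filtered_family I Q \<longleftrightarrow> I \<noteq> {} \<and> (\<forall>i\<in>I. \<forall>j\<in>I. \<exists>k\<in>I. Q k \<subseteq> Q i \<inter> Q j)"

text \<open>r(Q) = max of mu on Q (the theorem also asserts the max is attained).\<close>
definition rmax :: "('a \<Rightarrow> real) \<Rightarrow> 'a set \<Rightarrow> real" where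
  "rmax \<mu> Q = Sup (\<mu> ` Q)"

definition is_lub :: "('a \<Rightarrow> 'a \<Rightarrow> bool) \<Rightarrow> 'a set \<Rightarrow> 'a set \<Rightarrow> 'a \<Rightarrow> bool" where
  "is_lub le S D s \<longleftrightarrow> s \<in> S \<and> (\<forall>d\<in>D. le d s) \<and>
     (\<forall>u\<in>S. (\<forall>d\<in>D. le d u) \<longrightarrow> le s u)"

definition directed_in :: "('a \<Rightarrow> 'a \<Rightarrow> bool) \<Rightarrow> 'a set \<Rightarrow> 'a set \<Rightarrow> bool" where
  "directed_in le S D \<longleftrightarrow> D \<subseteq> S \<and> D \<noteq> {} \<and>
     (\<forall>a\<in>D. \<forall>b\<in>D. \<exists>c\<in>D. le a c \<and> le b c)"

definition is_dcpo :: "('a \<Rightarrow> 'a \<Rightarrow> bool) \<Rightarrow> 'a set \<Rightarrow> bool" where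
  "is_dcpo le S \<longleftrightarrow>
     (\<forall>x\<in>S. le x x) \<and>
     (\<forall>x\<in>S. \<forall>y\<in>S. \<forall>z\<in>S. le x y \<and> le y z \<longrightarrow> le x z) \<and>
     (\<forall>x\<in>S. \<forall>y\<in>S. le x y \<and> le y x \<longrightarrow> x = y) \<and>
     (\<forall>D. directed_in le S D \<longrightarrow> (\<exists>s. is_lub le S D s))"

definition way_below :: "('a \<Rightarrow> 'a \<Rightarrow> bool) \<Rightarrow> 'a set \<Rightarrow> 'a \<Rightarrow> 'a \<Rightarrow> bool" where
  "way_below le S x y \<longleftrightarrow> x \<in> S \<and> y \<in> S \<and>
     (\<forall>D s. directed_in le S D \<and> is_lub le S D s \<and> le y s \<longrightarrow> (\<exists>d\<in>D. le x d))"

definition continuous_dcpo :: "('a \<Rightarrow> 'a \<Rightarrow> bool) \<Rightarrow> 'a set \<Rightarrow> bool" where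
  "continuous_dcpo le S \<longleftrightarrow> is_dcpo le S \<and>
     (\<forall>y\<in>S. directed_in le S {x. way_below le S x y} \<and>
             is_lub le S {x. way_below le S x y} y)"

definition scott_open :: "('a \<Rightarrow> 'a \<Rightarrow> bool) \<Rightarrow> 'a set \<Rightarrow> 'a set \<Rightarrow> bool" where
  "scott_open le S U \<longleftrightarrow> U \<subseteq> S \<and>
     (\<forall>x\<in>U. \<forall>y\<in>S. le x y \<longrightarrow> y \<in> U) \<and>
     (\<forall>D s. directed_in le S D \<and> is_lub le S D s \<and> s \<in> U \<longrightarrow> D \<inter> U \<noteq> {})"

text \<open>Y is (homeomorphic to) a continuous dcpo with its Scott topology: the order is the
  specialization order of Y (which for a Scott topology coincides with the dcpo order),
  it makes topspace Y a continuous dcpo, and the open sets of Y are exactly the Scott-open sets.\<close>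
definition continuous_dcpo_scott :: "'a topology \<Rightarrow> bool" where
  "continuous_dcpo_scott Y \<longleftrightarrow> continuous_dcpo (spec_le Y) (topspace Y) \<and>
     (\<forall>U. openin Y U \<longleftrightarrow> scott_open (spec_le Y) (topspace Y) U)"

end

theory Submission
  imports Defs
begin

text \<open>
  Sober spaces are well-filtered: if the intersection of a filtered family of compact saturated
  sets lies in an open set \<open>U\<close>, then so does a member of the family. Otherwise a Zorn-maximal
  open set containing \<open>U\<close> but no member has an irreducible complement, and its generic point
  lies above a point of every member, hence in the intersection, hence in \<open>U\<close>. So the
  intersection is compact, saturated and non-empty, and it lies in \<open>X = \<mu>\<^sup>-\<^sup>1(0)\<close> because \<open>\<mu>\<close> is
  bounded by \<open>r(Q\<^sub>i)\<close> on \<open>Q\<^sub>i\<close>.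

  Conversely, \<open>\<mu>\<close> is upper semicontinuous, hence antitone for the specialization order, so \<open>X\<close>
  is upward closed and a compact saturated subset \<open>Q\<close> of \<open>X\<close> is compact saturated in \<open>Y\<close>.
  By local compactness the compact saturated sets with \<open>Q\<close> in their interior form a filtered
  neighbourhood base of \<open>Q\<close>; its intersection is \<open>Q\<close> because \<open>Q\<close> is saturated, and the values
  \<open>r\<close> tend to \<open>0\<close> because every open set \<open>\<mu>\<^sup>-\<^sup>1[0,\<epsilon>)\<close> contains \<open>Q\<close>. In a continuous dcpo the
  sets \<open>\<Up>y\<close> are Scott open, which yields neighbourhoods of the form \<open>\<up>A\<close> with \<open>A\<close> finite.
\<close>

section \<open>Specialization order and saturated sets\<close>

lemma spec_le_refl: "x \<in> topspace Y \<Longrightarrow> spec_le Y x x"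
  by (auto simp: spec_le_def)

lemma spec_le_trans: "spec_le Y x y \<Longrightarrow> spec_le Y y z \<Longrightarrow> spec_le Y x z"
  by (auto simp: spec_le_def)

lemma openin_spec_le: "openin Y U \<Longrightarrow> x \<in> U \<Longrightarrow> spec_le Y x y \<Longrightarrow> y \<in> U"
  by (auto simp: spec_le_def)

lemma spec_le_subtopology:
  "spec_le (subtopology Y S) x y \<longleftrightarrow> spec_le Y x y \<and> x \<in> S \<and> y \<in> S"
proof
  assume "spec_le (subtopology Y S) x y"
  then show "spec_le Y x y \<and> x \<in> S \<and> y \<in> S"
    unfolding spec_le_def by (auto simp: openin_subtopology)
next
  assume "spec_le Y x y \<and> x \<in> S \<and> y \<in> S"
  then show "spec_le (subtopology Y S) x y"
    unfolding spec_le_def openin_subtopology by auto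
qed

lemma spec_le_iff_in_closure_of:
  "spec_le Y x y \<longleftrightarrow> y \<in> topspace Y \<and> x \<in> Y closure_of {y}"
  unfolding spec_le_def in_closure_of by blast

lemma saturated_inD: "saturated_in Y Q \<Longrightarrow> x \<in> Q \<Longrightarrow> spec_le Y x y \<Longrightarrow> y \<in> Q"
  unfolding saturated_in_def by blast

lemma saturated_in_INT:
  assumes "I \<noteq> {}" "\<And>i. i \<in> I \<Longrightarrow> saturated_in Y (Q i)"
  shows "saturated_in Y (\<Inter>i\<in>I. Q i)"
  using assms unfolding saturated_in_def by blast

lemma saturated_in_subtopology_iff:
  assumes "saturated_in Y S" "Q \<subseteq> S"
  shows "saturated_in (subtopology Y S) Q \<longleftrightarrow> saturated_in Y Q"
proof
  assume sat: "saturated_in (subtopology Y S) Q"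
  show "saturated_in Y Q"
    unfolding saturated_in_def
  proof (intro conjI ballI allI impI)
    show "Q \<subseteq> topspace Y"
      using sat by (auto simp: saturated_in_def)
    fix x y assume "x \<in> Q" "spec_le Y x y"
    moreover from this have "y \<in> S"
      using assms unfolding saturated_in_def by blast
    ultimately show "y \<in> Q"
      using sat assms(2) unfolding saturated_in_def spec_le_subtopology by blast
  qed
next
  assume sat: "saturated_in Y Q"
  show "saturated_in (subtopology Y S) Q"
    unfolding saturated_in_def
  proof (intro conjI ballI allI impI)
    show "Q \<subseteq> topspace (subtopology Y S)"
      using sat assms(2) by (auto simp: saturated_in_def)
    fix x y assume "x \<in> Q" "spec_le (subtopology Y S) x y"
    then show "y \<in> Q"
      using sat unfolding saturated_in_def spec_le_subtopology by blast
  qed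
qed

lemma ncs_subtopology_iff:
  assumes "saturated_in Y S"
  shows "ncs (subtopology Y S) Q \<longleftrightarrow> ncs Y Q \<and> Q \<subseteq> S"
  using compactin_subtopology[of Y S Q] saturated_in_subtopology_iff[OF assms, of Q]
  unfolding ncs_def by blast

lemma saturated_in_separation:
  assumes "saturated_in Y Q" "y \<in> topspace Y" "y \<notin> Q"
  obtains U where "openin Y U" "Q \<subseteq> U" "y \<notin> U"
proof -
  let ?U = "\<Union>{U. openin Y U \<and> y \<notin> U}"
  have "Q \<subseteq> ?U"
  proof
    fix q assume "q \<in> Q"
    with assms have "\<not> spec_le Y q y" "q \<in> topspace Y"
      unfolding saturated_in_def by auto
    with assms(2) obtain U where "openin Y U" "q \<in> U" "y \<notin> U"
      unfolding spec_le_def by auto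
    then show "q \<in> ?U"
      by blast
  qed
  then show thesis
    by (intro that[of ?U]) auto
qed

lemma subset_upclosure: "A \<subseteq> topspace Y \<Longrightarrow> A \<subseteq> upclosure Y A"
  unfolding upclosure_def by (auto intro: spec_le_refl)

lemma upclosure_subset_openin: "openin Y W \<Longrightarrow> A \<subseteq> W \<Longrightarrow> upclosure Y A \<subseteq> W"
  unfolding upclosure_def using openin_spec_le[of Y W] by blast

lemma saturated_in_upclosure: "saturated_in Y (upclosure Y A)"
  unfolding saturated_in_def upclosure_def
proof (intro conjI ballI allI impI)
  fix x y assume "x \<in> {y \<in> topspace Y. \<exists>a\<in>A. spec_le Y a y}" "spec_le Y x y"
  then show "y \<in> {y \<in> topspace Y. \<exists>a\<in>A. spec_le Y a y}"
    using spec_le_trans[of Y _ x y] by (auto simp: spec_le_def[of Y x y])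
qed auto

lemma compactin_upclosure:
  assumes "compactin Y K"
  shows "compactin Y (upclosure Y K)"
  unfolding compactin_def
proof (intro conjI allI impI)
  show "upclosure Y K \<subseteq> topspace Y"
    unfolding upclosure_def by blast
  fix \<U> assume \<U>: "(\<forall>U\<in>\<U>. openin Y U) \<and> upclosure Y K \<subseteq> \<Union>\<U>"
  moreover have "K \<subseteq> upclosure Y K"
    using assms by (simp add: subset_upclosure compactin_subset_topspace)
  ultimately obtain \<F> where \<F>: "finite \<F>" "\<F> \<subseteq> \<U>" "K \<subseteq> \<Union>\<F>"
    using compactinD[OF assms, of \<U>] by (meson subset_trans)
  moreover have "openin Y (\<Union>\<F>)"
    using \<U> \<F>(2) by (intro openin_Union) blast
  ultimately have "upclosure Y K \<subseteq> \<Union>\<F>"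
    by (simp add: upclosure_subset_openin)
  with \<F> show "\<exists>\<F>. finite \<F> \<and> \<F> \<subseteq> \<U> \<and> upclosure Y K \<subseteq> \<Union>\<F>"
    by blast
qed

lemma ncs_upclosure:
  assumes "compactin Y K" "K \<noteq> {}"
  shows "ncs Y (upclosure Y K)"
  using assms subset_upclosure[of K Y]
  by (auto simp: ncs_def compactin_upclosure saturated_in_upclosure compactin_subset_topspace)

section \<open>Upper semicontinuous functions\<close>

definition upper_semicontinuous_map :: "'a topology \<Rightarrow> ('a \<Rightarrow> 'b::linorder) \<Rightarrow> bool" where
  "upper_semicontinuous_map Y f \<longleftrightarrow> (\<forall>a. openin Y {y \<in> topspace Y. f y < a})"

lemma upper_semicontinuous_map_unit_interval:
  fixes \<mu> :: "'a \<Rightarrow> real"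
  assumes "\<forall>y\<in>topspace Y. 0 \<le> \<mu> y \<and> \<mu> y \<le> 1"
    and "\<forall>a. 0 \<le> a \<and> a \<le> 1 \<longrightarrow> openin Y {y \<in> topspace Y. \<mu> y < a}"
  shows "upper_semicontinuous_map Y \<mu>"
  unfolding upper_semicontinuous_map_def
proof
  fix a :: real
  consider "a < 0" | "0 \<le> a \<and> a \<le> 1" | "1 < a"
    by linarith
  then show "openin Y {y \<in> topspace Y. \<mu> y < a}"
  proof cases
    case 1
    with assms(1) have "{y \<in> topspace Y. \<mu> y < a} = {}"
      by force
    then show ?thesis by (simp only: openin_empty)
  next
    case 3
    with assms(1) have "{y \<in> topspace Y. \<mu> y < a} = topspace Y"
      by force
    then show ?thesis by (simp only: openin_topspace)
  qed (use assms(2) in blast)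
qed

lemma upper_semicontinuous_map_antitone:
  assumes "upper_semicontinuous_map Y f" "spec_le Y x y"
  shows "f y \<le> f x"
proof (rule ccontr)
  assume "\<not> f y \<le> f x"
  with assms(2) have "x \<in> {z \<in> topspace Y. f z < f y}"
    by (auto simp: spec_le_def)
  moreover have "openin Y {z \<in> topspace Y. f z < f y}"
    using assms(1) by (simp add: upper_semicontinuous_map_def)
  ultimately have "y \<in> {z \<in> topspace Y. f z < f y}"
    using assms(2) by (meson openin_spec_le)
  then show False by simp
qed

lemma saturated_in_minimum_set:
  assumes "upper_semicontinuous_map Y f" "\<forall>y\<in>topspace Y. c \<le> f y"
  shows "saturated_in Y {y \<in> topspace Y. f y = c}"
  unfolding saturated_in_def
proof (intro conjI ballI allI impI)
  fix x y assume x: "x \<in> {y \<in> topspace Y. f y = c}" and xy: "spec_le Y x y"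
  then have "y \<in> topspace Y"
    by (simp add: spec_le_def)
  moreover have "f y \<le> c"
    using upper_semicontinuous_map_antitone[OF assms(1) xy] x by simp
  ultimately show "y \<in> {y \<in> topspace Y. f y = c}"
    using assms(2) by (simp add: order_antisym)
qed auto

lemma compactin_upper_semicontinuous_attains_max:
  fixes f :: "'a \<Rightarrow> 'b::linorder"
  assumes usc: "upper_semicontinuous_map Y f" and Q: "compactin Y Q" "Q \<noteq> {}"
  shows "\<exists>y\<in>Q. \<forall>z\<in>Q. f z \<le> f y"
proof (rule ccontr)
  assume "\<not> (\<exists>y\<in>Q. \<forall>z\<in>Q. f z \<le> f y)"
  then have above: "\<exists>z\<in>Q. f y < f z" if "y \<in> Q" for y
    using that by (meson not_le)
  define below where "below z = {y \<in> topspace Y. f y < f z}" for z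
  have "Q \<subseteq> \<Union>(below ` Q)"
  proof
    fix y assume "y \<in> Q"
    then obtain z where "z \<in> Q" "f y < f z"
      using above by blast
    moreover have "y \<in> topspace Y"
      using \<open>y \<in> Q\<close> compactin_subset_topspace[OF Q(1)] by blast
    ultimately show "y \<in> \<Union>(below ` Q)"
      unfolding below_def by blast
  qed
  moreover have "openin Y U" if "U \<in> below ` Q" for U
    using that usc by (auto simp: below_def upper_semicontinuous_map_def)
  ultimately have "\<exists>\<F>. finite \<F> \<and> \<F> \<subseteq> below ` Q \<and> Q \<subseteq> \<Union>\<F>"
    by (intro compactinD[OF Q(1)])
  then obtain \<F> where \<F>: "finite \<F>" "\<F> \<subseteq> below ` Q" "Q \<subseteq> \<Union>\<F>"
    by blast
  then obtain G where G: "G \<subseteq> Q" "finite G" "\<F> = below ` G"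
    by (meson finite_subset_image)
  with \<F>(3) have cover: "Q \<subseteq> \<Union>(below ` G)"
    by simp
  with Q(2) have "f ` G \<noteq> {}"
    by auto
  then have "Max (f ` G) \<in> f ` G"
    using G(2) by (intro Max_in) auto
  then obtain m where m: "m \<in> G" "f m = Max (f ` G)"
    by auto
  then obtain g where "g \<in> G" "m \<in> below g"
    using G(1) cover by blast
  then have "f m < f g"
    by (simp add: below_def)
  moreover have "f g \<le> f m"
    using m \<open>g \<in> G\<close> G(2) by simp
  ultimately show False
    by simp
qed

lemma rmax_attained:
  fixes \<mu> :: "'a \<Rightarrow> real"
  assumes "upper_semicontinuous_map Y \<mu>" "compactin Y Q" "Q \<noteq> {}"
  shows "\<exists>y\<in>Q. \<mu> y = rmax \<mu> Q \<and> (\<forall>z\<in>Q. \<mu> z \<le> \<mu> y)"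
proof -
  obtain y where y: "y \<in> Q" "\<forall>z\<in>Q. \<mu> z \<le> \<mu> y"
    using compactin_upper_semicontinuous_attains_max[OF assms] by blast
  then have "rmax \<mu> Q = \<mu> y"
    unfolding rmax_def by (intro cSup_eq_maximum) auto
  with y show ?thesis
    by auto
qed

section \<open>Local compactness\<close>

lemma lc_space_compact_neighbourhood:
  assumes lc: "lc_space Y" and Q: "compactin Y Q" and W: "openin Y W" "Q \<subseteq> W"
  obtains K where "compactin Y K" "Q \<subseteq> Y interior_of K" "K \<subseteq> W"
proof -
  have "\<exists>V K. openin Y V \<and> compactin Y K \<and> x \<in> V \<and> V \<subseteq> K \<and> K \<subseteq> W" if "x \<in> Q" for x
    using lc W that unfolding lc_space_def by blast
  then obtain V K where VK: "\<And>x. x \<in> Q \<Longrightarrow>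
      openin Y (V x) \<and> compactin Y (K x) \<and> x \<in> V x \<and> V x \<subseteq> K x \<and> K x \<subseteq> W"
    by metis
  have "Q \<subseteq> \<Union>(V ` Q)"
    using VK by blast
  then obtain \<F> where "finite \<F>" "\<F> \<subseteq> V ` Q" "Q \<subseteq> \<Union>\<F>"
    using compactinD[OF Q, of "V ` Q"] VK by blast
  then obtain G where G: "G \<subseteq> Q" "finite G" "Q \<subseteq> \<Union>(V ` G)"
    by (metis finite_subset_image)
  have "openin Y (\<Union>(V ` G))"
    using G VK by (intro openin_Union) auto
  moreover have "\<Union>(V ` G) \<subseteq> \<Union>(K ` G)"
    using G VK by (meson UN_mono subset_iff)
  ultimately have "Q \<subseteq> Y interior_of (\<Union>(K ` G))"
    using G(3) interior_of_maximal by blast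
  moreover have "compactin Y (\<Union>(K ` G))"
    using G VK by (intro compactin_Union) auto
  moreover have "\<Union>(K ` G) \<subseteq> W"
    using G VK by blast
  ultimately show thesis
    using that by blast
qed

lemma lc_space_ncs_neighbourhood:
  assumes "lc_space Y" "compactin Y Q" "Q \<noteq> {}" "openin Y W" "Q \<subseteq> W"
  obtains P where "ncs Y P" "Q \<subseteq> Y interior_of P" "P \<subseteq> W"
proof -
  obtain K where K: "compactin Y K" "Q \<subseteq> Y interior_of K" "K \<subseteq> W"
    using lc_space_compact_neighbourhood[OF assms(1,2,4,5)] .
  have "K \<subseteq> upclosure Y K"
    by (simp add: K(1) compactin_subset_topspace subset_upclosure)
  then have "Q \<subseteq> Y interior_of upclosure Y K"
    using K(2) interior_of_mono by blast
  moreover have "K \<noteq> {}"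
    using K(2) assms(3) interior_of_subset[of Y K] by blast
  ultimately show thesis
    using that ncs_upclosure[OF K(1)] upclosure_subset_openin[OF assms(4) K(3)] by blast
qed

section \<open>Sober spaces are well-filtered\<close>

lemma compactin_subset_Union_chain:
  assumes "compactin Y K" "\<forall>U\<in>\<C>. openin Y U" "subset.chain \<A> \<C>" "\<C> \<noteq> {}" "K \<subseteq> \<Union>\<C>"
  shows "\<exists>U\<in>\<C>. K \<subseteq> U"
proof -
  have "\<And>U. U \<in> \<C> \<Longrightarrow> openin Y U"
    using assms(2) by blast
  then obtain \<F> where \<F>: "finite \<F>" "\<F> \<subseteq> \<C>" "K \<subseteq> \<Union>\<F>"
    using compactinD[OF assms(1) _ assms(5)] by blast
  show ?thesis
  proof (cases "\<F> = {}")
    case True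
    then have "K = {}"
      using \<F>(3) by simp
    then show ?thesis
      using assms(4) by blast
  next
    case False
    from assms(3) have "\<C> \<subseteq> \<A>" "\<forall>X\<in>\<C>. \<forall>Z\<in>\<C>. X \<subseteq> Z \<or> Z \<subseteq> X"
      by (simp_all add: subset_chain_def)
    with \<F>(2) have "subset.chain \<A> \<F>"
      by (simp add: subset_chain_def) blast
    then have "\<Union>\<F> \<in> \<F>"
      by (rule Union_in_chain[OF \<F>(1) False])
    then show ?thesis
      using \<F>(2,3) by blast
  qed
qed

lemma maximal_open_avoiding_compacts:
  assumes "\<forall>i\<in>I. compactin Y (Q i)" "openin Y U" "\<forall>i\<in>I. \<not> Q i \<subseteq> U"
  obtains M where "openin Y M" "U \<subseteq> M" "\<forall>i\<in>I. \<not> Q i \<subseteq> M"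
    "\<forall>V. openin Y V \<and> M \<subseteq> V \<and> (\<forall>i\<in>I. \<not> Q i \<subseteq> V) \<longrightarrow> V = M"
proof -
  define \<A> where "\<A> = {V. openin Y V \<and> U \<subseteq> V \<and> (\<forall>i\<in>I. \<not> Q i \<subseteq> V)}"
  have "U \<in> \<A>"
    using assms by (simp add: \<A>_def)
  moreover have "\<Union>\<C> \<in> \<A>" if ne: "\<C> \<noteq> {}" and ch: "subset.chain \<A> \<C>" for \<C>
  proof -
    have members: "\<forall>V\<in>\<C>. openin Y V \<and> U \<subseteq> V \<and> (\<forall>i\<in>I. \<not> Q i \<subseteq> V)"
      using ch by (auto simp: subset_chain_def \<A>_def)
    then have opens: "\<forall>V\<in>\<C>. openin Y V"
      by blast
    have "\<not> Q i \<subseteq> \<Union>\<C>" if "i \<in> I" for i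
    proof
      assume "Q i \<subseteq> \<Union>\<C>"
      moreover have "compactin Y (Q i)"
        using assms(1) that by blast
      ultimately obtain V where "V \<in> \<C>" "Q i \<subseteq> V"
        by (meson compactin_subset_Union_chain[OF _ opens ch ne])
      with members that show False
        by blast
    qed
    moreover have "U \<subseteq> \<Union>\<C>"
      using ne members by blast
    ultimately show ?thesis
      using opens by (auto simp: \<A>_def)
  qed
  ultimately obtain M where "M \<in> \<A>" and max: "\<forall>V\<in>\<A>. M \<subseteq> V \<longrightarrow> V = M"
    using subset_Zorn_nonempty[of \<A>] by blast
  show thesis
  proof (rule that)
    show "openin Y M" "U \<subseteq> M" "\<forall>i\<in>I. \<not> Q i \<subseteq> M"
      using \<open>M \<in> \<A>\<close> by (simp_all add: \<A>_def)
    show "\<forall>V. openin Y V \<and> M \<subseteq> V \<and> (\<forall>i\<in>I. \<not> Q i \<subseteq> V) \<longrightarrow> V = M"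
    proof (intro allI impI)
      fix V assume V: "openin Y V \<and> M \<subseteq> V \<and> (\<forall>i\<in>I. \<not> Q i \<subseteq> V)"
      with \<open>M \<in> \<A>\<close> have "V \<in> \<A>"
        by (auto simp: \<A>_def)
      with max V show "V = M"
        by blast
    qed
  qed
qed

lemma maximal_open_avoiding_filtered_irreducible:
  assumes filt: "filtered_family I Q" and sub: "\<forall>i\<in>I. Q i \<subseteq> topspace Y"
    and M: "openin Y M" "\<forall>i\<in>I. \<not> Q i \<subseteq> M"
    and max: "\<forall>V. openin Y V \<and> M \<subseteq> V \<and> (\<forall>i\<in>I. \<not> Q i \<subseteq> V) \<longrightarrow> V = M"
  shows "irreducible_closed Y (topspace Y - M)"
proof -
  let ?C = "topspace Y - M"
  have enlarge: "\<exists>i\<in>I. Q i \<subseteq> M \<union> (topspace Y - A)" if "closedin Y A" "\<not> ?C \<subseteq> A" for A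
  proof (rule ccontr)
    assume "\<not> ?thesis"
    moreover have "openin Y (M \<union> (topspace Y - A))"
      using M(1) that(1) by (simp add: openin_Un openin_diff)
    ultimately have "M \<union> (topspace Y - A) = M"
      using max by blast
    with that(2) show False
      by blast
  qed
  obtain i where "i \<in> I"
    using filt by (auto simp: filtered_family_def)
  with sub M have "?C \<noteq> {}"
    by blast
  moreover have "?C \<subseteq> A \<or> ?C \<subseteq> B"
    if A: "closedin Y A" and B: "closedin Y B" and AB: "?C \<subseteq> A \<union> B" for A B
  proof (rule ccontr)
    assume "\<not> (?C \<subseteq> A \<or> ?C \<subseteq> B)"
    then obtain i j where "i \<in> I" "j \<in> I"
      "Q i \<subseteq> M \<union> (topspace Y - A)" "Q j \<subseteq> M \<union> (topspace Y - B)"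
      using enlarge[OF A] enlarge[OF B] by blast
    moreover obtain k where "k \<in> I" "Q k \<subseteq> Q i \<inter> Q j"
      using filt \<open>i \<in> I\<close> \<open>j \<in> I\<close> unfolding filtered_family_def by blast
    moreover have "Q k \<subseteq> topspace Y"
      using sub \<open>k \<in> I\<close> by blast
    ultimately have "Q k \<subseteq> M"
      using AB by blast
    with \<open>k \<in> I\<close> M(2) show False
      by blast
  qed
  moreover have "closedin Y ?C"
    using M(1) by (simp add: closedin_diff)
  ultimately show ?thesis
    unfolding irreducible_closed_def by blast
qed

lemma sober_space_well_filtered:
  assumes sober: "sober_space Y" and filt: "filtered_family I Q" and ncs: "\<forall>i\<in>I. ncs Y (Q i)"
    and U: "openin Y U" "(\<Inter>i\<in>I. Q i) \<subseteq> U"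
  shows "\<exists>i\<in>I. Q i \<subseteq> U"
proof (rule ccontr)
  assume "\<not> ?thesis"
  then have avoid: "\<forall>i\<in>I. \<not> Q i \<subseteq> U"
    by blast
  have sub: "\<forall>i\<in>I. Q i \<subseteq> topspace Y"
    using ncs by (auto simp: ncs_def compactin_subset_topspace)
  have compact: "\<forall>i\<in>I. compactin Y (Q i)"
    using ncs by (simp add: ncs_def)
  obtain M where M: "openin Y M" "U \<subseteq> M" "\<forall>i\<in>I. \<not> Q i \<subseteq> M"
    "\<forall>V. openin Y V \<and> M \<subseteq> V \<and> (\<forall>i\<in>I. \<not> Q i \<subseteq> V) \<longrightarrow> V = M"
    by (rule maximal_open_avoiding_compacts[OF compact U(1) avoid])
  have "irreducible_closed Y (topspace Y - M)"
    using maximal_open_avoiding_filtered_irreducible[OF filt sub M(1,3,4)] .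
  then obtain x where x: "x \<in> topspace Y" "Y closure_of {x} = topspace Y - M"
    using sober ex1_implies_ex unfolding sober_space_def by metis
  have "x \<in> Q i" if i: "i \<in> I" for i
  proof -
    obtain q where q: "q \<in> Q i" "q \<notin> M"
      using M(3) i by blast
    then have "q \<in> topspace Y - M"
      using sub i by blast
    then have "spec_le Y q x"
      using x by (simp add: spec_le_iff_in_closure_of)
    moreover have "saturated_in Y (Q i)"
      using ncs i by (simp add: ncs_def)
    ultimately show ?thesis
      using saturated_inD q(1) by metis
  qed
  then have "x \<in> M"
    using U(2) M(2) by blast
  moreover have "x \<in> Y closure_of {x}"
    using x(1) closure_of_subset[of "{x}" Y] by blast
  ultimately show False
    by (simp add: x(2))
qed

lemma sober_space_ncs_INT:
  assumes sober: "sober_space Y" and filt: "filtered_family I Q" and ncs: "\<forall>i\<in>I. ncs Y (Q i)"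
  shows "ncs Y (\<Inter>i\<in>I. Q i)"
proof -
  have "I \<noteq> {}"
    using filt by (simp add: filtered_family_def)
  have "(\<Inter>i\<in>I. Q i) \<noteq> {}"
  proof
    assume "(\<Inter>i\<in>I. Q i) = {}"
    then obtain i where "i \<in> I" "Q i \<subseteq> {}"
      using sober_space_well_filtered[OF assms openin_empty] by blast
    with ncs show False
      by (auto simp: ncs_def)
  qed
  moreover have "compactin Y (\<Inter>i\<in>I. Q i)"
    unfolding compactin_def
  proof (intro conjI allI impI)
    show "(\<Inter>i\<in>I. Q i) \<subseteq> topspace Y"
      using ncs \<open>I \<noteq> {}\<close> by (auto simp: ncs_def dest: compactin_subset_topspace)
    fix \<U> assume \<U>: "(\<forall>U\<in>\<U>. openin Y U) \<and> (\<Inter>i\<in>I. Q i) \<subseteq> \<Union>\<U>"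
    moreover have "openin Y (\<Union>\<U>)"
      using \<U> by (intro openin_Union) blast
    ultimately obtain i where "i \<in> I" "Q i \<subseteq> \<Union>\<U>"
      using sober_space_well_filtered[OF assms \<open>openin Y (\<Union>\<U>)\<close>] \<U> by blast
    moreover have "compactin Y (Q i)"
      using ncs \<open>i \<in> I\<close> by (simp add: ncs_def)
    moreover have "\<And>U. U \<in> \<U> \<Longrightarrow> openin Y U"
      using \<U> by blast
    ultimately obtain \<F> where "finite \<F>" "\<F> \<subseteq> \<U>" "Q i \<subseteq> \<Union>\<F>"
      using compactinD by metis
    with \<open>i \<in> I\<close> show "\<exists>\<F>. finite \<F> \<and> \<F> \<subseteq> \<U> \<and> (\<Inter>i\<in>I. Q i) \<subseteq> \<Union>\<F>"
      by blast
  qed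
  moreover have "saturated_in Y (\<Inter>i\<in>I. Q i)"
    using saturated_in_INT[OF \<open>I \<noteq> {}\<close>, of Y Q] ncs by (simp add: ncs_def)
  ultimately show ?thesis
    by (simp add: ncs_def)
qed

section \<open>Continuous dcpos\<close>

lemma way_below_in_topspace:
  "way_below (spec_le Y) (topspace Y) y z \<Longrightarrow> y \<in> topspace Y \<and> z \<in> topspace Y"
  unfolding way_below_def by blast

lemma way_below_imp_spec_le:
  assumes "way_below (spec_le Y) (topspace Y) y z"
  shows "spec_le Y y z"
proof -
  have z: "z \<in> topspace Y"
    using way_below_in_topspace[OF assms] by blast
  then have "directed_in (spec_le Y) (topspace Y) {z}" "is_lub (spec_le Y) (topspace Y) {z} z"
    by (auto simp: directed_in_def is_lub_def spec_le_refl)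
  with assms z show ?thesis
    unfolding way_below_def by (blast intro: spec_le_refl)
qed

lemma way_below_spec_le_trans:
  assumes "way_below (spec_le Y) (topspace Y) y z" "spec_le Y z z'"
  shows "way_below (spec_le Y) (topspace Y) y z'"
  unfolding way_below_def
proof (intro conjI allI impI)
  show "y \<in> topspace Y" "z' \<in> topspace Y"
    using assms way_below_in_topspace[OF assms(1)] by (auto simp: spec_le_def)
  fix D s
  assume "directed_in (spec_le Y) (topspace Y) D \<and> is_lub (spec_le Y) (topspace Y) D s \<and> spec_le Y z' s"
  moreover from this have "spec_le Y z s"
    using spec_le_trans[OF assms(2)] by blast
  ultimately show "\<exists>d\<in>D. spec_le Y y d"
    using assms(1) unfolding way_below_def by blast
qed

lemma spec_le_way_below_trans:
  assumes "spec_le Y y' y" "way_below (spec_le Y) (topspace Y) y z"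
  shows "way_below (spec_le Y) (topspace Y) y' z"
  unfolding way_below_def
proof (intro conjI allI impI)
  show "y' \<in> topspace Y" "z \<in> topspace Y"
    using assms way_below_in_topspace[OF assms(2)] by (auto simp: spec_le_def)
  fix D s
  assume "directed_in (spec_le Y) (topspace Y) D \<and> is_lub (spec_le Y) (topspace Y) D s \<and> spec_le Y z s"
  then obtain d where "d \<in> D" "spec_le Y y d"
    using assms(2) unfolding way_below_def by blast
  then show "\<exists>d\<in>D. spec_le Y y' d"
    using spec_le_trans[OF assms(1)] by blast
qed

context
  fixes Y :: "'a topology"
  assumes cd: "continuous_dcpo_scott Y"
begin

lemma continuous_dcpo_scott_approximation:
  assumes "x \<in> topspace Y"
  shows "directed_in (spec_le Y) (topspace Y) {w. way_below (spec_le Y) (topspace Y) w x}"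
    and "is_lub (spec_le Y) (topspace Y) {w. way_below (spec_le Y) (topspace Y) w x} x"
  using cd assms by (simp_all add: continuous_dcpo_scott_def continuous_dcpo_def)

lemma directed_way_below_Union:
  assumes D: "directed_in (spec_le Y) (topspace Y) D" and s: "is_lub (spec_le Y) (topspace Y) D s"
  defines "E \<equiv> {e. \<exists>d\<in>D. way_below (spec_le Y) (topspace Y) e d}"
  shows "directed_in (spec_le Y) (topspace Y) E" and "is_lub (spec_le Y) (topspace Y) E s"
proof -
  let ?le = "spec_le Y" and ?S = "topspace Y"
  let ?wb = "way_below ?le ?S"
  have DS: "D \<subseteq> ?S"
    using D by (simp add: directed_in_def)
  show "directed_in ?le ?S E"
    unfolding directed_in_def
  proof (intro conjI ballI)
    show "E \<subseteq> ?S"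
      unfolding E_def using way_below_in_topspace[of Y] by blast
    obtain d where "d \<in> D"
      using D by (auto simp: directed_in_def)
    moreover have "{w. ?wb w d} \<noteq> {}"
      using continuous_dcpo_scott_approximation(1) \<open>d \<in> D\<close> DS by (auto simp: directed_in_def)
    ultimately show "E \<noteq> {}"
      by (auto simp: E_def)
    fix e1 e2 assume "e1 \<in> E" "e2 \<in> E"
    then obtain d1 d2 where d12: "d1 \<in> D" "?wb e1 d1" "d2 \<in> D" "?wb e2 d2"
      by (auto simp: E_def)
    moreover obtain d3 where d3: "d3 \<in> D" "?le d1 d3" "?le d2 d3"
      using D \<open>d1 \<in> D\<close> \<open>d2 \<in> D\<close> unfolding directed_in_def by blast
    ultimately have "?wb e1 d3" "?wb e2 d3"
      using way_below_spec_le_trans[OF d12(2) d3(2)] way_below_spec_le_trans[OF d12(4) d3(3)]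
      by simp_all
    moreover have "directed_in ?le ?S {w. ?wb w d3}"
      using continuous_dcpo_scott_approximation(1) d3(1) DS by blast
    ultimately obtain c where "?wb c d3" "?le e1 c" "?le e2 c"
      unfolding directed_in_def by blast
    with d3(1) show "\<exists>c\<in>E. ?le e1 c \<and> ?le e2 c"
      by (auto simp: E_def)
  qed
  show "is_lub ?le ?S E s"
    unfolding is_lub_def
  proof (intro conjI ballI impI)
    show "s \<in> ?S"
      using s by (simp add: is_lub_def)
    show "?le e s" if e: "e \<in> E" for e
    proof -
      obtain d where "d \<in> D" "?wb e d"
        using e by (auto simp: E_def)
      moreover from this have "?le d s"
        using s by (simp add: is_lub_def)
      ultimately show ?thesis
        using spec_le_trans way_below_imp_spec_le by metis
    qed
    show "?le s u" if u: "u \<in> ?S" "\<forall>e\<in>E. ?le e u" for u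
    proof -
      have "?le d u" if "d \<in> D" for d
      proof -
        have "\<forall>w\<in>{w. ?wb w d}. ?le w u"
          using u(2) that by (auto simp: E_def)
        then show ?thesis
          using continuous_dcpo_scott_approximation(2) that DS u(1) by (auto simp: is_lub_def)
      qed
      then show ?thesis
        using s u(1) by (simp add: is_lub_def)
    qed
  qed
qed

text \<open>Continuity enters through interpolation: if \<open>y \<ll> sup D\<close>, then \<open>y \<ll> d\<close> for some
  \<open>d \<in> D\<close>, because the elements way below members of \<open>D\<close> form a directed set with the same
  supremum.\<close>

lemma openin_way_above:
  assumes "y \<in> topspace Y"
  shows "openin Y {z. way_below (spec_le Y) (topspace Y) y z}"
proof -
  let ?le = "spec_le Y" and ?S = "topspace Y"
  let ?wb = "way_below ?le ?S"
  have "D \<inter> {z. ?wb y z} \<noteq> {}"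
    if D: "directed_in ?le ?S D" and s: "is_lub ?le ?S D s" and ys: "?wb y s" for D s
  proof -
    let ?E = "{e. \<exists>d\<in>D. ?wb e d}"
    have "s \<in> ?S"
      using s by (simp add: is_lub_def)
    then have "?le s s"
      by (rule spec_le_refl)
    then have "\<exists>e\<in>?E. ?le y e"
      using ys directed_way_below_Union[OF D s] unfolding way_below_def by blast
    then obtain e d where "d \<in> D" "?wb e d" "?le y e"
      by blast
    then show ?thesis
      using spec_le_way_below_trans[of Y y e d] by blast
  qed
  moreover have "{z. ?wb y z} \<subseteq> ?S"
    using way_below_in_topspace[of Y y] by blast
  moreover have "z' \<in> {z. ?wb y z}" if "z \<in> {z. ?wb y z}" "?le z z'" for z z'
    using that way_below_spec_le_trans[of Y y z z'] by blast
  ultimately have "scott_open ?le ?S {z. ?wb y z}"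
    unfolding scott_open_def by blast
  then show ?thesis
    using cd by (simp add: continuous_dcpo_scott_def)
qed

lemma way_below_in_openin:
  assumes "openin Y W" "x \<in> W"
  shows "\<exists>y\<in>W. way_below (spec_le Y) (topspace Y) y x"
proof -
  have "x \<in> topspace Y"
    using assms openin_subset by blast
  moreover have "scott_open (spec_le Y) (topspace Y) W"
    using cd assms(1) by (simp add: continuous_dcpo_scott_def)
  ultimately show ?thesis
    using assms(2) continuous_dcpo_scott_approximation unfolding scott_open_def by blast
qed

lemma finite_upclosure_neighbourhood:
  assumes Q: "compactin Y Q" "Q \<noteq> {}" and W: "openin Y W" "Q \<subseteq> W"
  obtains A where "finite A" "A \<noteq> {}" "A \<subseteq> topspace Y"
    "Q \<subseteq> Y interior_of upclosure Y A" "upclosure Y A \<subseteq> W"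
proof -
  let ?wb = "way_below (spec_le Y) (topspace Y)"
  obtain g where g: "\<And>x. x \<in> Q \<Longrightarrow> g x \<in> W \<and> ?wb (g x) x"
    using way_below_in_openin[OF W(1)] W(2) by (metis subsetD)
  define above where "above x = {z. ?wb (g x) z}" for x
  have WT: "W \<subseteq> topspace Y"
    using W(1) by (rule openin_subset)
  have opens: "openin Y U" if "U \<in> above ` Q" for U
    using that g WT openin_way_above by (auto simp: above_def)
  have "Q \<subseteq> \<Union>(above ` Q)"
    using g by (auto simp: above_def)
  with opens have "\<exists>\<F>. finite \<F> \<and> \<F> \<subseteq> above ` Q \<and> Q \<subseteq> \<Union>\<F>"
    by (intro compactinD[OF Q(1)]) auto
  then obtain \<F> where \<F>: "finite \<F>" "\<F> \<subseteq> above ` Q" "Q \<subseteq> \<Union>\<F>"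
    by blast
  then obtain G where G: "G \<subseteq> Q" "finite G" "\<F> = above ` G"
    by (meson finite_subset_image)
  have AW: "g ` G \<subseteq> W"
    using G(1) g by blast
  have "\<Union>(above ` G) \<subseteq> upclosure Y (g ` G)"
    using way_below_imp_spec_le way_below_in_topspace
    by (fastforce simp: above_def upclosure_def)
  moreover have "openin Y (\<Union>(above ` G))"
    using G(1) opens by (intro openin_Union) auto
  ultimately have "\<Union>(above ` G) \<subseteq> Y interior_of upclosure Y (g ` G)"
    by (rule interior_of_maximal)
  moreover have "G \<noteq> {}"
    using Q(2) \<F>(3) G(3) by auto
  ultimately show thesis
    using that[of "g ` G"] G(2,3) \<F>(3) AW WT upclosure_subset_openin[OF W(1) AW] by auto
qed

end

section \<open>Compact saturated subsets of the zero set\<close>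

lemma neighbourhood_base_filtered_INT:
  assumes sat: "saturated_in Y Q"
    and nbhd: "\<forall>P\<in>\<F>. Q \<subseteq> Y interior_of P"
    and base: "\<And>W. \<lbrakk>openin Y W; Q \<subseteq> W\<rbrakk> \<Longrightarrow> \<exists>P\<in>\<F>. P \<subseteq> W"
  shows "filtered_family \<F> id" "Q = \<Inter>\<F>" "Q = (\<Inter>P\<in>\<F>. Y interior_of P)"
proof -
  have QT: "Q \<subseteq> topspace Y"
    using sat by (simp add: saturated_in_def)
  then obtain P0 where P0: "P0 \<in> \<F>" "P0 \<subseteq> topspace Y"
    using base[OF openin_topspace] by blast
  have "\<exists>P\<in>\<F>. P \<subseteq> P1 \<inter> P2" if "P1 \<in> \<F>" "P2 \<in> \<F>" for P1 P2
  proof -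
    let ?W = "Y interior_of P1 \<inter> Y interior_of P2"
    have "openin Y ?W" "Q \<subseteq> ?W"
      using nbhd that by auto
    then obtain P where "P \<in> \<F>" "P \<subseteq> ?W"
      using base by blast
    then show ?thesis
      using interior_of_subset[of Y P1] interior_of_subset[of Y P2] by blast
  qed
  with P0(1) show "filtered_family \<F> id"
    unfolding filtered_family_def by auto
  have "\<Inter>\<F> \<subseteq> Q"
  proof
    fix y assume y: "y \<in> \<Inter>\<F>"
    show "y \<in> Q"
    proof (rule ccontr)
      assume "y \<notin> Q"
      moreover have "y \<in> topspace Y"
        using y P0 by blast
      ultimately obtain U where "openin Y U" "Q \<subseteq> U" "y \<notin> U"
        using saturated_in_separation[OF sat] by blast
      then show False
        using base y by blast
    qed
  qed
  moreover have "(\<Inter>P\<in>\<F>. Y interior_of P) \<subseteq> \<Inter>\<F>"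
    using interior_of_subset[of Y] by blast
  moreover have "Q \<subseteq> (\<Inter>P\<in>\<F>. Y interior_of P)"
    using nbhd by blast
  ultimately show "Q = \<Inter>\<F>" "Q = (\<Inter>P\<in>\<F>. Y interior_of P)"
    by blast+
qed

lemma INF_rmax_neighbourhood_base:
  fixes \<mu> :: "'a \<Rightarrow> real"
  assumes usc: "upper_semicontinuous_map Y \<mu>" and nonneg: "\<forall>y\<in>topspace Y. 0 \<le> \<mu> y"
    and Q: "Q \<subseteq> topspace Y" "\<forall>q\<in>Q. \<mu> q = 0"
    and ncs: "\<forall>P\<in>\<F>. ncs Y P" and ne: "\<F> \<noteq> {}"
    and base: "\<And>W. \<lbrakk>openin Y W; Q \<subseteq> W\<rbrakk> \<Longrightarrow> \<exists>P\<in>\<F>. P \<subseteq> W"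
  shows "(INF P\<in>\<F>. rmax \<mu> P) = 0"
proof -
  have max: "\<exists>y\<in>P. \<mu> y = rmax \<mu> P \<and> (\<forall>z\<in>P. \<mu> z \<le> \<mu> y)" if "P \<in> \<F>" for P
    using rmax_attained[OF usc] ncs that by (simp add: ncs_def)
  have "0 \<le> rmax \<mu> P" if "P \<in> \<F>" for P
    using max[OF that] ncs that nonneg
    by (metis compactin_subset_topspace ncs_def subsetD)
  then have lower: "0 \<le> (INF P\<in>\<F>. rmax \<mu> P)" and bdd: "bdd_below (rmax \<mu> ` \<F>)"
    using ne by (auto intro: cINF_greatest bdd_belowI2[of \<F> 0])
  have "(INF P\<in>\<F>. rmax \<mu> P) \<le> e" if "0 < e" for e
  proof -
    have "openin Y {y \<in> topspace Y. \<mu> y < e}"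
      using usc by (simp add: upper_semicontinuous_map_def)
    moreover have "Q \<subseteq> {y \<in> topspace Y. \<mu> y < e}"
      using Q that by auto
    ultimately obtain P where "P \<in> \<F>" "P \<subseteq> {y \<in> topspace Y. \<mu> y < e}"
      using base by blast
    moreover from this obtain y where "y \<in> P" "\<mu> y = rmax \<mu> P"
      using max by blast
    ultimately have "rmax \<mu> P \<le> e"
      by auto
    then show ?thesis
      using cINF_lower[OF bdd \<open>P \<in> \<F>\<close>] by linarith
  qed
  then have "(INF P\<in>\<F>. rmax \<mu> P) \<le> 0"
    by (rule dense_ge)
  with lower show ?thesis
    by linarith
qed

lemma ncs_INT_in_zero_set:
  fixes \<mu> :: "'a \<Rightarrow> real"
  assumes sober: "sober_space Y" and usc: "upper_semicontinuous_map Y \<mu>"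
    and nonneg: "\<forall>y\<in>topspace Y. 0 \<le> \<mu> y"
    and filt: "filtered_family I Q" and ncs: "\<forall>i\<in>I. ncs Y (Q i)"
    and inf: "(INF i\<in>I. rmax \<mu> (Q i)) = 0"
  shows "ncs (subtopology Y {y \<in> topspace Y. \<mu> y = 0}) (\<Inter>i\<in>I. Q i)"
proof -
  have ncs_INT: "ncs Y (\<Inter>i\<in>I. Q i)"
    by (rule sober_space_ncs_INT[OF sober filt ncs])
  have "y \<in> {y \<in> topspace Y. \<mu> y = 0}" if y: "y \<in> (\<Inter>i\<in>I. Q i)" for y
  proof -
    have "\<mu> y \<le> rmax \<mu> (Q i)" if "i \<in> I" for i
      using rmax_attained[OF usc] ncs y that by (fastforce simp: ncs_def)
    then have "\<mu> y \<le> 0"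
      using filt inf by (metis cINF_greatest filtered_family_def)
    moreover have "y \<in> topspace Y"
      using ncs_INT y compactin_subset_topspace unfolding ncs_def by blast
    ultimately show ?thesis
      using nonneg by force
  qed
  then have "(\<Inter>i\<in>I. Q i) \<subseteq> {y \<in> topspace Y. \<mu> y = 0}"
    by blast
  with ncs_INT show ?thesis
    by (simp add: ncs_subtopology_iff[OF saturated_in_minimum_set[OF usc nonneg]])
qed

lemma ncs_zero_set_neighbourhood_base:
  fixes \<mu> :: "'a \<Rightarrow> real"
  assumes usc: "upper_semicontinuous_map Y \<mu>" and nonneg: "\<forall>y\<in>topspace Y. 0 \<le> \<mu> y"
    and Q: "ncs (subtopology Y {y \<in> topspace Y. \<mu> y = 0}) Q"
    and nbhd: "\<forall>P\<in>\<F>. ncs Y P \<and> Q \<subseteq> Y interior_of P"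
    and base: "\<And>W. \<lbrakk>openin Y W; Q \<subseteq> W\<rbrakk> \<Longrightarrow> \<exists>P\<in>\<F>. P \<subseteq> W"
  shows "filtered_family \<F> id \<and> (\<forall>P\<in>\<F>. ncs Y P) \<and> (INF P\<in>\<F>. rmax \<mu> P) = 0 \<and>
    Q = \<Inter>\<F> \<and> Q = (\<Inter>P\<in>\<F>. Y interior_of P)"
proof -
  have "ncs Y Q" and Q0: "\<forall>q\<in>Q. \<mu> q = 0"
    using Q ncs_subtopology_iff[OF saturated_in_minimum_set[OF usc nonneg]] by auto
  then have sat: "saturated_in Y Q" and QT: "Q \<subseteq> topspace Y"
    by (auto simp: ncs_def saturated_in_def)
  have "filtered_family \<F> id" "Q = \<Inter>\<F>" "Q = (\<Inter>P\<in>\<F>. Y interior_of P)"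
    using neighbourhood_base_filtered_INT[OF sat _ base] nbhd by auto
  moreover have "\<F> \<noteq> {}"
    using base[OF openin_topspace QT] by blast
  then have "(INF P\<in>\<F>. rmax \<mu> P) = 0"
    using INF_rmax_neighbourhood_base[OF usc nonneg QT Q0 _ _ base] nbhd by blast
  ultimately show ?thesis
    using nbhd by blast
qed

lemma lc_space_ncs_zero_set_filtered_INT:
  fixes \<mu> :: "'a \<Rightarrow> real"
  assumes lc: "lc_space Y" and usc: "upper_semicontinuous_map Y \<mu>"
    and nonneg: "\<forall>y\<in>topspace Y. 0 \<le> \<mu> y"
    and Q: "ncs (subtopology Y {y \<in> topspace Y. \<mu> y = 0}) Q"
  shows "\<exists>\<Q>. filtered_family \<Q> id \<and> (\<forall>P\<in>\<Q>. ncs Y P) \<and>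
    (INF P\<in>\<Q>. rmax \<mu> P) = 0 \<and> Q = \<Inter>\<Q> \<and> Q = (\<Inter>P\<in>\<Q>. Y interior_of P)"
proof -
  have "compactin Y Q" "Q \<noteq> {}"
    using Q ncs_subtopology_iff[OF saturated_in_minimum_set[OF usc nonneg]] by (auto simp: ncs_def)
  let ?\<F> = "{P. ncs Y P \<and> Q \<subseteq> Y interior_of P}"
  have "\<forall>P\<in>?\<F>. ncs Y P \<and> Q \<subseteq> Y interior_of P"
    by blast
  moreover have "\<exists>P\<in>?\<F>. P \<subseteq> W" if W: "openin Y W" "Q \<subseteq> W" for W
  proof -
    obtain P where "ncs Y P" "Q \<subseteq> Y interior_of P" "P \<subseteq> W"
      by (rule lc_space_ncs_neighbourhood[OF lc \<open>compactin Y Q\<close> \<open>Q \<noteq> {}\<close> W])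
    then show ?thesis
      by blast
  qed
  ultimately have "filtered_family ?\<F> id \<and> (\<forall>P\<in>?\<F>. ncs Y P) \<and> (INF P\<in>?\<F>. rmax \<mu> P) = 0 \<and>
      Q = \<Inter>?\<F> \<and> Q = (\<Inter>P\<in>?\<F>. Y interior_of P)"
    by (rule ncs_zero_set_neighbourhood_base[OF usc nonneg Q])
  then show ?thesis
    by (intro exI[of _ ?\<F>])
qed

lemma continuous_dcpo_ncs_zero_set_filtered_INT:
  fixes \<mu> :: "'a \<Rightarrow> real"
  assumes cd: "continuous_dcpo_scott Y" and usc: "upper_semicontinuous_map Y \<mu>"
    and nonneg: "\<forall>y\<in>topspace Y. 0 \<le> \<mu> y"
    and Q: "ncs (subtopology Y {y \<in> topspace Y. \<mu> y = 0}) Q"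
  shows "\<exists>\<Q>. filtered_family \<Q> id \<and> (\<forall>P\<in>\<Q>. ncs Y P) \<and>
    (INF P\<in>\<Q>. rmax \<mu> P) = 0 \<and> Q = \<Inter>\<Q> \<and> Q = (\<Inter>P\<in>\<Q>. Y interior_of P) \<and>
    (\<forall>P\<in>\<Q>. \<exists>A. finite A \<and> A \<noteq> {} \<and> A \<subseteq> topspace Y \<and> P = upclosure Y A)"
proof -
  have "compactin Y Q" "Q \<noteq> {}"
    using Q ncs_subtopology_iff[OF saturated_in_minimum_set[OF usc nonneg]] by (auto simp: ncs_def)
  let ?\<A> = "{upclosure Y A | A. finite A \<and> A \<noteq> {} \<and> A \<subseteq> topspace Y \<and> Q \<subseteq> Y interior_of upclosure Y A}"
  have "\<forall>P\<in>?\<A>. ncs Y P \<and> Q \<subseteq> Y interior_of P"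
    by (auto intro: ncs_upclosure finite_imp_compactin)
  moreover have "\<exists>P\<in>?\<A>. P \<subseteq> W" if W: "openin Y W" "Q \<subseteq> W" for W
  proof -
    obtain A where "finite A" "A \<noteq> {}" "A \<subseteq> topspace Y"
      "Q \<subseteq> Y interior_of upclosure Y A" "upclosure Y A \<subseteq> W"
      by (rule finite_upclosure_neighbourhood[OF cd \<open>compactin Y Q\<close> \<open>Q \<noteq> {}\<close> W])
    then show ?thesis
      by blast
  qed
  ultimately have "filtered_family ?\<A> id \<and> (\<forall>P\<in>?\<A>. ncs Y P) \<and> (INF P\<in>?\<A>. rmax \<mu> P) = 0 \<and>
      Q = \<Inter>?\<A> \<and> Q = (\<Inter>P\<in>?\<A>. Y interior_of P)"
    by (rule ncs_zero_set_neighbourhood_base[OF usc nonneg Q])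
  then show ?thesis
    by (intro exI[of _ ?\<A>]) blast
qed

theorem theorem17p3:
  fixes Y :: "'a topology" and \<mu> :: "'a \<Rightarrow> real"
  assumes lc: "lc_space Y"
    and sober: "sober_space Y"
    and range: "\<forall>y\<in>topspace Y. 0 \<le> \<mu> y \<and> \<mu> y \<le> 1"
    and opn: "\<forall>a. 0 \<le> a \<and> a \<le> 1 \<longrightarrow> openin Y {y \<in> topspace Y. \<mu> y < a}"
  defines "X \<equiv> subtopology Y {y \<in> topspace Y. \<mu> y = 0}"
  shows
    "(\<forall>Q. ncs Y Q \<longrightarrow> (\<exists>y\<in>Q. \<mu> y = rmax \<mu> Q \<and> (\<forall>z\<in>Q. \<mu> z \<le> \<mu> y)))
     \<and> (\<forall>(I :: 'i set) Q. filtered_family I Q \<and> (\<forall>i\<in>I. ncs Y (Q i)) \<and>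
           (INF i\<in>I. rmax \<mu> (Q i)) = 0 \<longrightarrow> ncs X (\<Inter>i\<in>I. Q i))
     \<and> (\<forall>Q. ncs X Q \<longrightarrow>
           (\<exists>\<Q> :: 'a set set. filtered_family \<Q> id \<and> (\<forall>P\<in>\<Q>. ncs Y P) \<and>
              (INF P\<in>\<Q>. rmax \<mu> P) = 0 \<and> Q = \<Inter>\<Q> \<and> Q = (\<Inter>P\<in>\<Q>. Y interior_of P)))
     \<and> (continuous_dcpo_scott Y \<longrightarrow> (\<forall>Q. ncs X Q \<longrightarrow>
           (\<exists>\<Q> :: 'a set set. filtered_family \<Q> id \<and> (\<forall>P\<in>\<Q>. ncs Y P) \<and>
              (INF P\<in>\<Q>. rmax \<mu> P) = 0 \<and> Q = \<Inter>\<Q> \<and> Q = (\<Inter>P\<in>\<Q>. Y interior_of P) \<and>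
              (\<forall>P\<in>\<Q>. \<exists>A. finite A \<and> A \<noteq> {} \<and> A \<subseteq> topspace Y \<and> P = upclosure Y A))))"
proof (intro conjI allI impI)
  have usc: "upper_semicontinuous_map Y \<mu>"
    using range opn by (rule upper_semicontinuous_map_unit_interval)
  have nonneg: "\<forall>y\<in>topspace Y. 0 \<le> \<mu> y"
    using range by blast
  show "\<exists>y\<in>Q. \<mu> y = rmax \<mu> Q \<and> (\<forall>z\<in>Q. \<mu> z \<le> \<mu> y)" if "ncs Y Q" for Q
    using rmax_attained[OF usc] that by (simp add: ncs_def)
  show "ncs X (\<Inter>i\<in>I. Q i)"
    if "filtered_family I Q \<and> (\<forall>i\<in>I. ncs Y (Q i)) \<and> (INF i\<in>I. rmax \<mu> (Q i)) = 0"
    for I :: "'i set" and Q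
    unfolding X_def using that by (blast intro: ncs_INT_in_zero_set[OF sober usc nonneg])
  show "\<exists>\<Q> :: 'a set set. filtered_family \<Q> id \<and> (\<forall>P\<in>\<Q>. ncs Y P) \<and>
      (INF P\<in>\<Q>. rmax \<mu> P) = 0 \<and> Q = \<Inter>\<Q> \<and> Q = (\<Inter>P\<in>\<Q>. Y interior_of P)"
    if "ncs X Q" for Q
    using lc_space_ncs_zero_set_filtered_INT[OF lc usc nonneg] that by (simp add: X_def)
  show "\<exists>\<Q> :: 'a set set. filtered_family \<Q> id \<and> (\<forall>P\<in>\<Q>. ncs Y P) \<and>
      (INF P\<in>\<Q>. rmax \<mu> P) = 0 \<and> Q = \<Inter>\<Q> \<and> Q = (\<Inter>P\<in>\<Q>. Y interior_of P) \<and>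
      (\<forall>P\<in>\<Q>. \<exists>A. finite A \<and> A \<noteq> {} \<and> A \<subseteq> topspace Y \<and> P = upclosure Y A)"
    if "continuous_dcpo_scott Y" "ncs X Q" for Q
    using continuous_dcpo_ncs_zero_set_filtered_INT[OF _ usc nonneg] that by (simp add: X_def)
qed

end
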